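(* Let $\mathbf{X}$ be a set of discrete random variables with sample space $\Omega(\mathbf{X})$, and let $O$ be a positive unital circuit over $\mathbf{X}$. Then the family $\{O(\mathbf{x})\}_{\mathbf{x}\in\Omega(\mathbf{X})}$ is a positive operator-valued measure, i.e. each $O(\mathbf{x})$ is positive semi-definite and $\sum_{\mathbf{x}\in\Omega(\mathbf{X})}O(\mathbf{x})=\mathbb{1}$.
   Context: A positive operator-valued measure (POVM) is a finite family of PSD complex matrices summing to the identity matrix. A quantum operation from $d\times d$ to $d'\times d'$ complex matrices is a map $\Phi(A)=\sum_{j}K_jAK_j^*$ with $d'\times d$ matrices $K_j$ satisfying $\sum_j K_j^*K_j\le\mathbb{1}$ (Loewner order); it is unital if $\Phi(\mathbb{1}_d)=\mathbb{1}_{d'}$. A partition circuit over $\mathbf{X}=\{X_0,\dots,X_{N-1}\}$ is a rooted binary tree whose leaves are in bijection with the variables (leaf $k$ carries variable $X_k$ with finite sample space $\Omega(X_k)$); each internal unit $k$ has two children $k_l,k_r$; $\mathbf{x}_k$ denotes an assignment to the variables at the leaves below $k$. A positive operator circuit assigns to each leaf $k$ PSD matrices $E_{x_k}$, $x_k\in\Omega(X_k)$, and to each internal unit $k$ a quantum operation $\Phi_k$, and computes $O_k(\mathbf{x}_k)=E_{x_k}$ at leaves and $O_k(\mathbf{x}_k)=\Phi_k(O_{k_l}(\mathbf{x}_{k_l})\otimes O_{k_r}(\mathbf{x}_{k_r}))$ at internal units ($\otimes$ the Kronecker product); $O(\mathbf{x})=O_{\mathrm{root}}(\mathbf{x})$.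 It is a positive unital circuit if every $\Phi_k$ is unital (i.e. $\Phi_k(\mathbb{1}_{k_l}\otimes\mathbb{1}_{k_r})=\mathbb{1}_k$ with identity matrices of the appropriate sizes) and for every leaf $k$ the family $\{E_{x_k}\}_{x_k\in\Omega(X_k)}$ is a POVM. *)

theory Defs
  imports "Jordan_Normal_Form.Matrix"
begin

definition adj :: "complex mat \<Rightarrow> complex mat" where
  "adj A = mat (dim_col A) (dim_row A) (\<lambda>(i,j). cnj (A $$ (j,i)))"

definition msum :: "nat \<Rightarrow> ('i \<Rightarrow> complex mat) \<Rightarrow> 'i set \<Rightarrow> complex mat" where
  "msum d f S = mat d d (\<lambda>(i,j). \<Sum>x\<in>S. f x $$ (i,j))"

definition psd :: "nat \<Rightarrow> complex mat \<Rightarrow> bool" where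
  "psd d A \<longleftrightarrow> A \<in> carrier_mat d d \<and> adj A = A \<and>
     (\<forall>v :: nat \<Rightarrow> complex.
        Im (\<Sum>i<d. \<Sum>j<d. cnj (v i) * A $$ (i,j) * v j) = 0 \<and>
        Re (\<Sum>i<d. \<Sum>j<d. cnj (v i) * A $$ (i,j) * v j) \<ge> 0)"

definition loewner_le :: "nat \<Rightarrow> complex mat \<Rightarrow> complex mat \<Rightarrow> bool" where
  "loewner_le d A B \<longleftrightarrow> A \<in> carrier_mat d d \<and> B \<in> carrier_mat d d \<and> psd d (B - A)"

definition kron :: "complex mat \<Rightarrow> complex mat \<Rightarrow> complex mat" where
  "kron A B = mat (dim_row A * dim_row B) (dim_col A * dim_col B)
     (\<lambda>(i,j). A $$ (i div dim_row B, j div dim_col B) * B $$ (i mod dim_row B, j mod dim_col B))"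

definition povm :: "nat \<Rightarrow> ('i \<Rightarrow> complex mat) \<Rightarrow> 'i set \<Rightarrow> bool" where
  "povm d E S \<longleftrightarrow> finite S \<and> (\<forall>x\<in>S. psd d (E x)) \<and> msum d E S = 1\<^sub>m d"

definition kraus_apply :: "nat \<Rightarrow> complex mat list \<Rightarrow> complex mat \<Rightarrow> complex mat" where
  "kraus_apply d' Ks A = msum d' (\<lambda>j. Ks ! j * A * adj (Ks ! j)) {..<length Ks}"

definition quantum_op :: "nat \<Rightarrow> nat \<Rightarrow> complex mat list \<Rightarrow> bool" where
  "quantum_op d d' Ks \<longleftrightarrow> (\<forall>K\<in>set Ks. K \<in> carrier_mat d' d) \<and>
     loewner_le d (msum d (\<lambda>j. adj (Ks ! j) * Ks ! j) {..<length Ks}) (1\<^sub>m d)"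

text \<open>Leaf k d E: leaf carrying variable X_k, dimension d, effects E x for x in Omega(X_k).
  Node d Ks l r: internal unit of dimension d with Kraus operators Ks, children l r.\<close>
datatype 'a circ = Leaf nat nat "'a \<Rightarrow> complex mat"
                 | Node nat "complex mat list" "'a circ" "'a circ"

fun cdim :: "'a circ \<Rightarrow> nat" where
  "cdim (Leaf k d E) = d"
| "cdim (Node d Ks l r) = d"

fun leaves :: "'a circ \<Rightarrow> nat list" where
  "leaves (Leaf k d E) = [k]"
| "leaves (Node d Ks l r) = leaves l @ leaves r"

definition partition_circ :: "nat \<Rightarrow> 'a circ \<Rightarrow> bool" where
  "partition_circ N C \<longleftrightarrow> distinct (leaves C) \<and> set (leaves C) = {..<N}"

fun eval :: "'a circ \<Rightarrow> (nat \<Rightarrow> 'a) \<Rightarrow> complex mat" where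
  "eval (Leaf k d E) x = E (x k)"
| "eval (Node d Ks l r) x = kraus_apply d Ks (kron (eval l x) (eval r x))"

text \<open>Positive unital circuit (Omega k is the sample space of X_k).\<close>
fun pos_unital :: "(nat \<Rightarrow> 'a set) \<Rightarrow> 'a circ \<Rightarrow> bool" where
  "pos_unital \<Omega> (Leaf k d E) = povm d E (\<Omega> k)"
| "pos_unital \<Omega> (Node d Ks l r) =
     (quantum_op (cdim l * cdim r) d Ks \<and>
      kraus_apply d Ks (1\<^sub>m (cdim l * cdim r)) = 1\<^sub>m d \<and>
      pos_unital \<Omega> l \<and> pos_unital \<Omega> r)"

end

theory Submission
  imports Defs "HOL-Library.Complex_Order"
begin

text \<open>At an internal unit an assignment to the leaves below splits
  into independent assignments for the two children, so the sum over all assignments of the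
  Kronecker products of the children's outputs factorises into the Kronecker product of their
  sums, which is \<open>1 \<otimes> 1 = 1\<close>; linearity and unitality of the quantum operation then give \<open>1\<close>.
  Positivity survives sums, congruences \<open>A \<mapsto> K A K\<^sup>*\<close> and Kronecker products. For the last one,
  Cholesky elimination writes \<open>A\<close> as a sum of rank-one matrices \<open>\<alpha> \<alpha>\<^sup>*\<close>, which turns the
  quadratic form of \<open>A \<otimes> B\<close> into a sum of quadratic forms of \<open>B\<close>.\<close>

section \<open>Positive semi-definite Hermitian forms\<close>

definition qform :: "nat \<Rightarrow> (nat \<Rightarrow> nat \<Rightarrow> complex) \<Rightarrow> (nat \<Rightarrow> complex) \<Rightarrow> complex" where
  "qform n A v = (\<Sum>i<n. \<Sum>j<n. cnj (v i) * A i j * v j)"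

text \<open>With the ordering of \<open>HOL-Library.Complex_Order\<close>, \<open>0 \<le> z\<close> means that \<open>z\<close> is a
  nonnegative real number.\<close>
definition psd_form :: "nat \<Rightarrow> (nat \<Rightarrow> nat \<Rightarrow> complex) \<Rightarrow> bool" where
  "psd_form n A \<longleftrightarrow> (\<forall>i<n. \<forall>j<n. A i j = cnj (A j i)) \<and> (\<forall>v. 0 \<le> qform n A v)"

lemma psd_form_hermitian: "psd_form n A \<Longrightarrow> i < n \<Longrightarrow> j < n \<Longrightarrow> A i j = cnj (A j i)"
  unfolding psd_form_def by blast

lemma psd_form_nonneg: "psd_form n A \<Longrightarrow> 0 \<le> qform n A v"
  unfolding psd_form_def by blast

lemma qform_cong:
  assumes "\<And>i. i < n \<Longrightarrow> v i = w i" and "\<And>i j. i < n \<Longrightarrow> j < n \<Longrightarrow> A i j = B i j"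
  shows "qform n A v = qform n B w"
  unfolding qform_def using assms by (intro sum.cong refl) auto

lemma qform_sum: "qform n (\<lambda>i j. \<Sum>x\<in>S. F x i j) v = (\<Sum>x\<in>S. qform n (F x) v)"
  unfolding qform_def by (simp add: sum_distrib_left sum_distrib_right sum.swap[where B=S])

lemma qform_unit_vector:
  assumes "i < n"
  shows "qform n A (\<lambda>l. if l = i then 1 else 0) = A i i"
proof -
  have "qform n A (\<lambda>l. if l = i then 1 else 0) = (\<Sum>a<n. \<Sum>b<n. if a = i \<and> b = i then A a b else 0)"
    unfolding qform_def by (intro sum.cong refl) auto
  also have "\<dots> = (\<Sum>a<n. if a = i then A a i else 0)"
    by (intro sum.cong refl) (auto simp: assms)
  finally show ?thesis using assms by simp
qed

lemma sum_two_point: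
  fixes g :: "nat \<Rightarrow> complex"
  assumes "i \<noteq> k" "i < n" "k < n"
  shows "(\<Sum>l<n. g l * (if l = i then x else if l = k then y else 0)) = g i * x + g k * y"
proof -
  have "(\<Sum>l<n. g l * (if l = i then x else if l = k then y else 0))
     = (\<Sum>l<n. (if l = i then g l * x else 0) + (if l = k then g l * y else 0))"
    using assms by (intro sum.cong) auto
  also have "\<dots> = g i * x + g k * y" using assms by (simp add: sum.distrib)
  finally show ?thesis .
qed

lemma qform_two_point_vector:
  assumes "i \<noteq> k" "i < n" "k < n"
  shows "qform n A (\<lambda>l. if l = i then x else if l = k then y else 0)
    = cnj x * A i i * x + cnj x * A i k * y + cnj y * A k i * x + cnj y * A k k * y"
proof -
  let ?v = "\<lambda>l. if l = i then x else if l = k then y else 0"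
  have cnj_v: "cnj (?v l) = (if l = i then cnj x else if l = k then cnj y else 0)" for l
    by auto
  have "qform n A ?v
     = (\<Sum>j<n. (\<Sum>l<n. A l j * (if l = i then cnj x else if l = k then cnj y else 0)) * ?v j)"
    unfolding qform_def cnj_v
    by (subst sum.swap) (simp add: sum_distrib_left sum_distrib_right mult_ac)
  also have "\<dots> = (\<Sum>j<n. (A i j * cnj x + A k j * cnj y) * ?v j)"
    using sum_two_point[OF assms] by simp
  also have "\<dots> = (A i i * cnj x + A k i * cnj y) * x + (A i k * cnj x + A k k * cnj y) * y"
    using sum_two_point[OF assms, of "\<lambda>j. A i j * cnj x + A k j * cnj y"] by simp
  finally show ?thesis by (simp add: algebra_simps)
qed

lemma qform_diff_rank_one:
  "qform n (\<lambda>i j. A i j - u i * cnj (u j)) w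
     = qform n A w - (\<Sum>i<n. cnj (w i) * u i) * cnj (\<Sum>j<n. cnj (w j) * u j)"
  by (simp add: qform_def algebra_simps sum_subtractf sum_product)

lemma qform_Suc_zero_border:
  assumes "\<forall>i\<le>n. A i n = 0" "\<forall>j\<le>n. A n j = 0"
  shows "qform (Suc n) A v = qform n A v"
  using assms by (simp add: qform_def lessThan_Suc sum.distrib)

lemma psd_form_Suc_zero_border:
  assumes "psd_form (Suc n) A" "\<forall>i\<le>n. A i n = 0" "\<forall>j\<le>n. A n j = 0"
  shows "psd_form n A"
  using psd_form_hermitian[OF assms(1)] psd_form_nonneg[OF assms(1)]
  unfolding psd_form_def qform_Suc_zero_border[OF assms(2,3)] by (blast intro: less_SucI)

lemma psd_form_diag:
  assumes "psd_form n A" "i < n"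
  obtains p where "A i i = complex_of_real p" "p \<ge> 0"
proof -
  have "0 \<le> A i i"
    using psd_form_nonneg[OF assms(1)] by (metis qform_unit_vector[OF assms(2)])
  then show ?thesis
    by (intro that[of "Re (A i i)"]) (auto simp: less_eq_complex_def complex_eq_iff)
qed

text \<open>Test the form on \<open>x e\<^sub>i + e\<^sub>k\<close> with \<open>x = -r A\<^sub>i\<^sub>k\<close> and \<open>r\<close> small: its value is
  \<open>r |A\<^sub>i\<^sub>k|\<^sup>2 (r A\<^sub>i\<^sub>i - 2) < 0\<close>.\<close>
lemma psd_form_zero_diag_imp_zero_col:
  assumes A: "psd_form n A" and k: "k < n" "A k k = 0" and i: "i < n"
  shows "A i k = 0"
proof (rule ccontr)
  define a where "a = A i k"
  assume "A i k \<noteq> 0"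
  then have a0: "a \<noteq> 0" and ik: "i \<noteq> k" using k by (auto simp: a_def)
  obtain p where p: "A i i = complex_of_real p" "p \<ge> 0" using psd_form_diag[OF A i] .
  define r where "r = 1 / (p + 1)"
  have r: "r > 0" "r * p < 1" using p unfolding r_def by (simp_all add: field_simps)
  define x where "x = - complex_of_real r * a"
  have aki: "A k i = cnj a" using psd_form_hermitian[OF A i k(1)] by (simp add: a_def)
  have "qform n A (\<lambda>l. if l = i then x else if l = k then 1 else 0)
     = (complex_of_real r * complex_of_real r * complex_of_real p - 2 * complex_of_real r) * (cnj a * a)"
    unfolding qform_two_point_vector[OF ik i k(1)] k(2) aki a_def[symmetric] p(1) x_def
    by (simp add: algebra_simps)
  also have "\<dots> = complex_of_real (r * (cmod a)\<^sup>2 * (r * p - 2))"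
    unfolding mult.commute[of "cnj a" a] complex_norm_square[symmetric] by (simp add: algebra_simps)
  finally have "0 \<le> r * (cmod a)\<^sup>2 * (r * p - 2)"
    using psd_form_nonneg[OF A] by (metis Re_complex_of_real less_eq_complex_def zero_complex.sel(1))
  moreover have "r * (cmod a)\<^sup>2 * (r * p - 2) < 0"
    using r a0 by (intro mult_pos_neg) auto
  ultimately show False by linarith
qed

text \<open>One step of Cholesky elimination: \<open>u\<close> is the last column scaled by \<open>1 / \<surd>A\<^sub>n\<^sub>n\<close>,
  and \<open>A - u u\<^sup>*\<close> is positive because its form at \<open>v\<close> equals the form of \<open>A\<close> at \<open>v\<close>
  with the last entry changed to make \<open>v\<close> orthogonal to \<open>u\<close>.\<close>
lemma psd_form_peel:
  assumes A: "psd_form (Suc n) A"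
  obtains u where "psd_form n (\<lambda>i j. A i j - u i * cnj (u j))"
    and "\<And>i. i \<le> n \<Longrightarrow> A i n = u i * cnj (u n)"
    and "\<And>j. j \<le> n \<Longrightarrow> A n j = u n * cnj (u j)"
proof (cases "A n n = 0")
  case True
  have col: "A i n = 0" if "i \<le> n" for i
    using psd_form_zero_diag_imp_zero_col[OF A _ True] that by simp
  have row: "A n j = 0" if "j \<le> n" for j
    using psd_form_hermitian[OF A, of n j] col[OF that] that by simp
  have "psd_form n A" using psd_form_Suc_zero_border[OF A] col row by blast
  then show ?thesis by (intro that[of "\<lambda>_. 0"]) (simp_all add: col row)
next
  case False
  obtain c where c: "A n n = complex_of_real c" "c \<ge> 0" using psd_form_diag[OF A] by blast
  define s where "s = sqrt c"
  have s: "s > 0" "complex_of_real s * complex_of_real s = A n n"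
    using c False by (auto simp: s_def simp flip: of_real_mult)
  define u where "u i = A i n / complex_of_real s" for i
  have u_n: "u n = complex_of_real s" using s unfolding u_def by (simp add: field_simps)
  have col: "A i n = u i * cnj (u n)" for i
    using s(1) unfolding u_n by (simp add: u_def)
  have row: "A n j = u n * cnj (u j)" if "j \<le> n" for j
    using psd_form_hermitian[OF A, of n j] that col[of j] by (simp add: mult.commute)
  define B where "B i j = A i j - u i * cnj (u j)" for i j
  have B_col: "\<forall>i\<le>n. B i n = 0" and B_row: "\<forall>j\<le>n. B n j = 0"
    using col row by (simp_all add: B_def)
  have "0 \<le> qform (Suc n) B v" for v
  proof -
    define t where "t = (\<Sum>i<n. cnj (v i) * u i)"
    define w where "w = v(n := - cnj t / complex_of_real s)"
    have w_orth: "(\<Sum>i<Suc n. cnj (w i) * u i) = 0"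
      using s(1) by (simp add: lessThan_Suc t_def w_def u_n)
    have "qform (Suc n) B v = qform (Suc n) B w"
      unfolding qform_Suc_zero_border[OF B_col B_row] by (rule qform_cong) (simp_all add: w_def)
    also have "\<dots> = qform (Suc n) A w"
      unfolding B_def[abs_def] qform_diff_rank_one w_orth by simp
    finally show ?thesis using psd_form_nonneg[OF A] by simp
  qed
  moreover have "B i j = cnj (B j i)" if "i < Suc n" "j < Suc n" for i j
    using psd_form_hermitian[OF A that] by (simp add: B_def)
  ultimately have "psd_form (Suc n) B" unfolding psd_form_def by blast
  then have "psd_form n B" using psd_form_Suc_zero_border B_col B_row by blast
  then show ?thesis using that col row unfolding B_def[abs_def] by blast
qed

lemma psd_form_rank_one_sum:
  assumes "psd_form n A"
  shows "\<exists>\<alpha>. \<forall>i<n. \<forall>j<n. A i j = (\<Sum>m<n. \<alpha> m i * cnj (\<alpha> m j))"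
  using assms
proof (induction n arbitrary: A)
  case 0
  then show ?case by simp
next
  case (Suc n)
  obtain u where B: "psd_form n (\<lambda>i j. A i j - u i * cnj (u j))"
    and col: "\<And>i. i \<le> n \<Longrightarrow> A i n = u i * cnj (u n)"
    and row: "\<And>j. j \<le> n \<Longrightarrow> A n j = u n * cnj (u j)"
    using psd_form_peel[OF Suc.prems] by blast
  obtain \<beta> where \<beta>: "\<forall>i<n. \<forall>j<n. A i j - u i * cnj (u j) = (\<Sum>m<n. \<beta> m i * cnj (\<beta> m j))"
    using Suc.IH[OF B] by blast
  define \<alpha> where "\<alpha> m i = (if m = n then u i else if i = n then 0 else \<beta> m i)" for m i
  have "A i j = (\<Sum>m<Suc n. \<alpha> m i * cnj (\<alpha> m j))" if i: "i < Suc n" and j: "j < Suc n" for i j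
  proof (cases "i = n \<or> j = n")
    case True
    then show ?thesis using col row i j by (auto simp: lessThan_Suc \<alpha>_def)
  next
    case False
    then have "i < n" "j < n" using i j by auto
    moreover have "(\<Sum>m<n. \<alpha> m i * cnj (\<alpha> m j)) = (\<Sum>m<n. \<beta> m i * cnj (\<beta> m j))"
      using False by (intro sum.cong) (auto simp: \<alpha>_def)
    ultimately show ?thesis using \<beta> by (simp add: lessThan_Suc \<alpha>_def diff_eq_eq add_ac)
  qed
  then show ?case by blast
qed

section \<open>Positive semi-definite matrices and quantum operations\<close>

lemma adj_carrier: "A \<in> carrier_mat m n \<Longrightarrow> adj A \<in> carrier_mat n m"
  by (simp add: adj_def)

lemma adj_index: "i < dim_col A \<Longrightarrow> j < dim_row A \<Longrightarrow> adj A $$ (i,j) = cnj (A $$ (j,i))"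
  by (simp add: adj_def)

lemma adj_eq_iff_hermitian:
  assumes A: "A \<in> carrier_mat d d"
  shows "adj A = A \<longleftrightarrow> (\<forall>i<d. \<forall>j<d. A $$ (i,j) = cnj (A $$ (j,i)))"
proof (intro iffI allI impI)
  fix i j assume "adj A = A" "i < d" "j < d"
  then show "A $$ (i,j) = cnj (A $$ (j,i))"
    using A adj_index[of i A j] by simp
next
  assume herm: "\<forall>i<d. \<forall>j<d. A $$ (i,j) = cnj (A $$ (j,i))"
  show "adj A = A"
  proof (rule eq_matI)
    fix i j assume "i < dim_row A" "j < dim_col A"
    then show "adj A $$ (i,j) = A $$ (i,j)"
      using A herm[rule_format, of i j] adj_index[of i A j] by simp
  qed (use A in \<open>simp_all add: adj_def\<close>)
qed

lemma psd_iff_psd_form: "psd d A \<longleftrightarrow> A \<in> carrier_mat d d \<and> psd_form d (\<lambda>i j. A $$ (i,j))"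
proof -
  have "0 \<le> z \<longleftrightarrow> Im z = 0 \<and> 0 \<le> Re z" for z :: complex
    by (auto simp: less_eq_complex_def)
  then show ?thesis
    unfolding psd_def psd_form_def qform_def using adj_eq_iff_hermitian by blast
qed

lemma msum_carrier [simp]: "msum d f S \<in> carrier_mat d d"
  by (simp add: msum_def)

lemma msum_index: "i < d \<Longrightarrow> j < d \<Longrightarrow> msum d f S $$ (i,j) = (\<Sum>x\<in>S. f x $$ (i,j))"
  by (simp add: msum_def)

lemma msum_cong: "(\<And>x. x \<in> S \<Longrightarrow> f x = g x) \<Longrightarrow> msum d f S = msum d g S"
  unfolding msum_def by (intro cong_mat refl) (auto intro!: sum.cong)

lemma psd_msum:
  assumes "\<And>x. x \<in> S \<Longrightarrow> psd d (f x)"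
  shows "psd d (msum d f S)"
proof -
  have f: "psd_form d (\<lambda>i j. f x $$ (i,j))" if "x \<in> S" for x
    using assms[OF that] unfolding psd_iff_psd_form by blast
  have "msum d f S $$ (i,j) = cnj (msum d f S $$ (j,i))" if "i < d" "j < d" for i j
  proof -
    have "f x $$ (i,j) = cnj (f x $$ (j,i))" if "x \<in> S" for x
      using psd_form_hermitian[OF f[OF that] \<open>i < d\<close> \<open>j < d\<close>] .
    then have "msum d f S $$ (i,j) = (\<Sum>x\<in>S. cnj (f x $$ (j,i)))"
      unfolding msum_index[OF that] by (rule sum.cong[OF refl])
    then show ?thesis using that by (simp add: msum_index)
  qed
  moreover have "0 \<le> qform d (\<lambda>i j. msum d f S $$ (i,j)) v" for v
  proof -
    have "qform d (\<lambda>i j. msum d f S $$ (i,j)) v = (\<Sum>x\<in>S. qform d (\<lambda>i j. f x $$ (i,j)) v)"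
      unfolding qform_sum[symmetric] by (rule qform_cong) (simp_all add: msum_index)
    also have "0 \<le> \<dots>" using psd_form_nonneg[OF f] by (rule sum_nonneg)
    finally show ?thesis .
  qed
  ultimately show ?thesis unfolding psd_iff_psd_form psd_form_def using msum_carrier by blast
qed

lemma index_mult_mult_adj:
  assumes K: "K \<in> carrier_mat d n" and A: "A \<in> carrier_mat n n" and i: "i < d" and j: "j < d"
  shows "(K * A * adj K) $$ (i,j) = (\<Sum>p<n. \<Sum>q<n. K $$ (i,p) * A $$ (p,q) * cnj (K $$ (j,q)))"
proof -
  have "(K * A * adj K) $$ (i,j) = (\<Sum>q<n. (\<Sum>p<n. K $$ (i,p) * A $$ (p,q)) * cnj (K $$ (j,q)))"
    using K A i j by (simp add: scalar_prod_def adj_def atLeast0LessThan)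
  then show ?thesis by (subst sum.swap) (simp add: sum_distrib_right)
qed

lemma psd_mult_mult_adj:
  assumes A: "psd n A" and K: "K \<in> carrier_mat d n"
  shows "psd d (K * A * adj K)"
proof -
  have Ac: "A \<in> carrier_mat n n" and A_form: "psd_form n (\<lambda>i j. A $$ (i,j))"
    using A unfolding psd_iff_psd_form by blast+
  have "(K * A * adj K) $$ (i,j) = cnj ((K * A * adj K) $$ (j,i))" if "i < d" "j < d" for i j
  proof -
    have herm: "cnj (A $$ (p,q)) = A $$ (q,p)" if "p < n" "q < n" for p q
      using psd_form_hermitian[OF A_form that(2,1)] by simp
    have "cnj ((K * A * adj K) $$ (j,i)) = (\<Sum>p<n. \<Sum>q<n. cnj (K $$ (j,p)) * cnj (A $$ (p,q)) * K $$ (i,q))"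
      by (simp add: index_mult_mult_adj[OF K Ac that(2,1)])
    also have "\<dots> = (\<Sum>p<n. \<Sum>q<n. cnj (K $$ (j,p)) * A $$ (q,p) * K $$ (i,q))"
      by (intro sum.cong refl) (simp add: herm)
    also have "\<dots> = (K * A * adj K) $$ (i,j)"
      by (subst sum.swap) (simp add: index_mult_mult_adj[OF K Ac that] mult_ac)
    finally show ?thesis by simp
  qed
  moreover have "0 \<le> qform d (\<lambda>i j. (K * A * adj K) $$ (i,j)) v" for v
  proof -
    have "qform d (\<lambda>i j. (K * A * adj K) $$ (i,j)) v
        = qform d (\<lambda>i j. \<Sum>p<n. \<Sum>q<n. K $$ (i,p) * A $$ (p,q) * cnj (K $$ (j,q))) v"
      by (rule qform_cong) (simp_all add: index_mult_mult_adj[OF K Ac])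
    also have "\<dots> = qform n (\<lambda>i j. A $$ (i,j)) (\<lambda>q. \<Sum>i<d. cnj (K $$ (i,q)) * v i)"
      unfolding qform_def
      by (simp add: sum_distrib_left sum_distrib_right sum.swap[where A="{..<n}" and B="{..<d}"] mult_ac)
    also have "0 \<le> \<dots>" by (rule psd_form_nonneg[OF A_form])
    finally show ?thesis .
  qed
  moreover have "K * A * adj K \<in> carrier_mat d d" using K Ac adj_carrier[OF K] by simp
  ultimately show ?thesis unfolding psd_iff_psd_form psd_form_def by blast
qed

lemma psd_kraus_apply:
  assumes "\<forall>K\<in>set Ks. K \<in> carrier_mat d n" "psd n A"
  shows "psd d (kraus_apply d Ks A)"
  unfolding kraus_apply_def using assms by (intro psd_msum psd_mult_mult_adj) auto

lemma kraus_apply_msum: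
  assumes K: "\<forall>K\<in>set Ks. K \<in> carrier_mat d n" and f: "\<And>x. x \<in> S \<Longrightarrow> f x \<in> carrier_mat n n"
  shows "kraus_apply d Ks (msum n f S) = msum d (\<lambda>x. kraus_apply d Ks (f x)) S"
proof (rule eq_matI)
  fix i j assume "i < dim_row (msum d (\<lambda>x. kraus_apply d Ks (f x)) S)"
    "j < dim_col (msum d (\<lambda>x. kraus_apply d Ks (f x)) S)"
  then have i: "i < d" and j: "j < d" by (simp_all add: msum_def)
  have Kk: "Ks ! k \<in> carrier_mat d n" if "k < length Ks" for k using K that by auto
  have "kraus_apply d Ks (msum n f S) $$ (i,j)
      = (\<Sum>k<length Ks. \<Sum>p<n. \<Sum>q<n. Ks ! k $$ (i,p) * (\<Sum>x\<in>S. f x $$ (p,q)) * cnj (Ks ! k $$ (j,q)))"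
    unfolding kraus_apply_def msum_index[OF i j]
    by (intro sum.cong refl) (simp add: index_mult_mult_adj[OF Kk _ i j] msum_index)
  also have "\<dots> = (\<Sum>x\<in>S. \<Sum>k<length Ks. \<Sum>p<n. \<Sum>q<n. Ks ! k $$ (i,p) * f x $$ (p,q) * cnj (Ks ! k $$ (j,q)))"
    by (simp add: sum_distrib_left sum_distrib_right sum.swap[where B=S])
  also have "\<dots> = msum d (\<lambda>x. kraus_apply d Ks (f x)) S $$ (i,j)"
    unfolding msum_index[OF i j] kraus_apply_def
    by (intro sum.cong refl) (simp add: msum_index[OF i j] index_mult_mult_adj[OF Kk _ i j] f)
  finally show "kraus_apply d Ks (msum n f S) $$ (i,j) = msum d (\<lambda>x. kraus_apply d Ks (f x)) S $$ (i,j)" .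
qed (simp_all add: kraus_apply_def msum_def)

section \<open>Kronecker products\<close>

lemma kron_carrier: "A \<in> carrier_mat a a \<Longrightarrow> B \<in> carrier_mat b b \<Longrightarrow> kron A B \<in> carrier_mat (a*b) (a*b)"
  by (simp add: kron_def)

lemma kron_index:
  "A \<in> carrier_mat a a \<Longrightarrow> B \<in> carrier_mat b b \<Longrightarrow> i < a*b \<Longrightarrow> j < a*b \<Longrightarrow>
   kron A B $$ (i,j) = A $$ (i div b, j div b) * B $$ (i mod b, j mod b)"
  by (simp add: kron_def)

lemma kron_index_pair:
  assumes "A \<in> carrier_mat a a" "B \<in> carrier_mat b b" "p < a" "q < b" "r < a" "s < b"
  shows "kron A B $$ (p*b+q, r*b+s) = A $$ (p,r) * B $$ (q,s)"
proof -
  have "x*b+y < a*b" if "x < a" "y < b" for x y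
  proof -
    have "x*b+y < (x+1)*b" using that by simp
    also have "\<dots> \<le> a*b" using that by (intro mult_right_mono) auto
    finally show ?thesis .
  qed
  then show ?thesis using assms by (simp add: kron_index)
qed

lemma kron_one: "kron (1\<^sub>m a) (1\<^sub>m b) = 1\<^sub>m (a*b)"
proof (rule eq_matI)
  fix i j assume "i < dim_row (1\<^sub>m (a*b) :: complex mat)" "j < dim_col (1\<^sub>m (a*b) :: complex mat)"
  then have i: "i < a*b" and j: "j < a*b" by simp_all
  then have "b > 0" by (cases "b = 0") auto
  moreover have "i div b < a" "j div b < a" using i j by (simp_all add: less_mult_imp_div_less)
  moreover have "i = j \<longleftrightarrow> i div b = j div b \<and> i mod b = j mod b" by (metis div_mult_mod_eq)
  ultimately show "kron (1\<^sub>m a) (1\<^sub>m b) $$ (i,j) = 1\<^sub>m (a*b) $$ (i,j)"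
    using kron_index[OF one_carrier_mat one_carrier_mat i j] i j by simp
qed (simp_all add: kron_def)

lemma sum_lessThan_mult:
  fixes g :: "nat \<Rightarrow> 'a::comm_monoid_add"
  shows "(\<Sum>i<a*b. g i) = (\<Sum>p<a. \<Sum>q<b. g (p*b+q))"
proof -
  have "(\<Sum>i<a*b. g i) = (\<Sum>p<a. sum g {p*b..<p*b+b})"
    using sum.nat_group[of g b a] by simp
  also have "\<dots> = (\<Sum>p<a. \<Sum>q<b. g (p*b+q))"
  proof (rule sum.cong[OF refl])
    fix p
    have "sum g {0 + p*b..<b + p*b} = (\<Sum>q=0..<b. g (q + p*b))"
      by (rule sum.shift_bounds_nat_ivl)
    then show "sum g {p*b..<p*b+b} = (\<Sum>q<b. g (p*b+q))"
      by (simp add: atLeast0LessThan add.commute)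
  qed
  finally show ?thesis .
qed

lemma sum_rank_one_form_reorder:
  fixes V :: "'p \<Rightarrow> 'q \<Rightarrow> complex" and \<alpha> :: "'m \<Rightarrow> 'p \<Rightarrow> complex" and B :: "'q \<Rightarrow> 'q \<Rightarrow> complex"
  shows "(\<Sum>p\<in>P. \<Sum>q\<in>Q. \<Sum>r\<in>P'. \<Sum>s\<in>Q'. cnj (V p q) * (\<Sum>m\<in>M. \<alpha> m p * cnj (\<alpha> m r)) * B q s * V r s)
   = (\<Sum>m\<in>M. \<Sum>q\<in>Q. \<Sum>s\<in>Q'. cnj (\<Sum>p\<in>P. cnj (\<alpha> m p) * V p q) * B q s * (\<Sum>r\<in>P'. cnj (\<alpha> m r) * V r s))"
  by (simp add: sum_distrib_left sum_distrib_right sum.swap[where B=M]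
      sum.swap[where A=P and B=Q] sum.swap[where A=P and B=Q'] sum.swap[where A=P' and B=Q]
      sum.swap[where A=P' and B=Q'] sum.swap[where A=Q' and B=Q] sum.swap[where A=P' and B=P] mult_ac)

lemma qform_kron:
  assumes Ac: "A \<in> carrier_mat a a" and Bc: "B \<in> carrier_mat b b"
    and \<alpha>: "\<And>i j. i < a \<Longrightarrow> j < a \<Longrightarrow> A $$ (i,j) = (\<Sum>m<a. \<alpha> m i * cnj (\<alpha> m j))"
  shows "qform (a*b) (\<lambda>i j. kron A B $$ (i,j)) v
       = (\<Sum>m<a. qform b (\<lambda>q s. B $$ (q,s)) (\<lambda>q. \<Sum>p<a. cnj (\<alpha> m p) * v (p*b+q)))"
proof -
  have "qform (a*b) (\<lambda>i j. kron A B $$ (i,j)) v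
      = (\<Sum>p<a. \<Sum>q<b. \<Sum>r<a. \<Sum>s<b.
           cnj (v (p*b+q)) * (\<Sum>m<a. \<alpha> m p * cnj (\<alpha> m r)) * B $$ (q,s) * v (r*b+s))"
    unfolding qform_def sum_lessThan_mult[of _ a b]
    by (intro sum.cong refl) (simp add: kron_index_pair[OF Ac Bc] \<alpha>)
  also have "\<dots> = (\<Sum>m<a. qform b (\<lambda>q s. B $$ (q,s)) (\<lambda>q. \<Sum>p<a. cnj (\<alpha> m p) * v (p*b+q)))"
    unfolding qform_def by (rule sum_rank_one_form_reorder[where V="\<lambda>p q. v (p*b+q)"])
  finally show ?thesis .
qed

lemma psd_kron:
  assumes A: "psd a A" and B: "psd b B"
  shows "psd (a*b) (kron A B)"
proof -
  have Ac: "A \<in> carrier_mat a a" and A_form: "psd_form a (\<lambda>i j. A $$ (i,j))"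
    and Bc: "B \<in> carrier_mat b b" and B_form: "psd_form b (\<lambda>i j. B $$ (i,j))"
    using A B unfolding psd_iff_psd_form by blast+
  have "kron A B $$ (i,j) = cnj (kron A B $$ (j,i))" if i: "i < a*b" and j: "j < a*b" for i j
  proof -
    have "b > 0" using i by (cases "b = 0") auto
    then have "i div b < a" "j div b < a" "i mod b < b" "j mod b < b"
      using i j by (simp_all add: less_mult_imp_div_less)
    then show ?thesis
      using psd_form_hermitian[OF A_form, of "i div b" "j div b"]
        psd_form_hermitian[OF B_form, of "i mod b" "j mod b"]
      by (simp add: kron_index[OF Ac Bc i j] kron_index[OF Ac Bc j i])
  qed
  moreover have "0 \<le> qform (a*b) (\<lambda>i j. kron A B $$ (i,j)) v" for v
  proof -
    obtain \<alpha> where \<alpha>: "\<And>i j. i < a \<Longrightarrow> j < a \<Longrightarrow> A $$ (i,j) = (\<Sum>m<a. \<alpha> m i * cnj (\<alpha> m j))"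
      using psd_form_rank_one_sum[OF A_form] by blast
    have "qform (a*b) (\<lambda>i j. kron A B $$ (i,j)) v
        = (\<Sum>m<a. qform b (\<lambda>q s. B $$ (q,s)) (\<lambda>q. \<Sum>p<a. cnj (\<alpha> m p) * v (p*b+q)))"
      by (rule qform_kron[OF Ac Bc \<alpha>])
    also have "0 \<le> \<dots>" by (intro sum_nonneg psd_form_nonneg[OF B_form])
    finally show ?thesis .
  qed
  ultimately show ?thesis
    unfolding psd_iff_psd_form psd_form_def using kron_carrier[OF Ac Bc] by blast
qed

section \<open>Positive unital circuits\<close>

lemma psd_carrier: "psd d A \<Longrightarrow> A \<in> carrier_mat d d"
  by (simp add: psd_def)

lemma bij_betw_restrict_PiE_Un:
  assumes "S1 \<inter> S2 = {}"
  shows "bij_betw (\<lambda>x. (restrict x S1, restrict x S2)) (PiE (S1 \<union> S2) \<Omega>) (PiE S1 \<Omega> \<times> PiE S2 \<Omega>)"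
proof (rule bij_betwI[where g = "\<lambda>(y,z) k. if k \<in> S1 then y k else z k"])
  show "(\<lambda>x. (restrict x S1, restrict x S2)) \<in> PiE (S1 \<union> S2) \<Omega> \<rightarrow> PiE S1 \<Omega> \<times> PiE S2 \<Omega>"
    by auto
  show "(\<lambda>(y,z) k. if k \<in> S1 then y k else z k) \<in> PiE S1 \<Omega> \<times> PiE S2 \<Omega> \<rightarrow> PiE (S1 \<union> S2) \<Omega>"
    by (auto simp: PiE_def extensional_def Pi_def)
  show "(\<lambda>(y,z) k. if k \<in> S1 then y k else z k) (restrict x S1, restrict x S2) = x"
    if "x \<in> PiE (S1 \<union> S2) \<Omega>" for x
    using that by (auto simp: PiE_def extensional_def fun_eq_iff)
  show "(restrict ((\<lambda>(y,z) k. if k \<in> S1 then y k else z k) yz) S1,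
         restrict ((\<lambda>(y,z) k. if k \<in> S1 then y k else z k) yz) S2) = yz"
    if "yz \<in> PiE S1 \<Omega> \<times> PiE S2 \<Omega>" for yz
    using that assms by (cases yz) (auto simp: PiE_def extensional_def fun_eq_iff)
qed

lemma bij_betw_PiE_singleton: "bij_betw (\<lambda>x. x k) (PiE {k} \<Omega>) (\<Omega> k)"
proof (rule bij_betwI[where g = "\<lambda>y. restrict (\<lambda>_. y) {k}"])
  show "restrict (\<lambda>_. x k) {k} = x" if "x \<in> PiE {k} \<Omega>" for x
    using that by (auto simp: PiE_def extensional_def fun_eq_iff)
qed auto

lemma msum_kron_PiE:
  assumes disj: "S1 \<inter> S2 = {}"
    and F: "\<And>y. y \<in> PiE S1 \<Omega> \<Longrightarrow> F y \<in> carrier_mat a a"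
    and G: "\<And>z. z \<in> PiE S2 \<Omega> \<Longrightarrow> G z \<in> carrier_mat b b"
  shows "msum (a*b) (\<lambda>x. kron (F (restrict x S1)) (G (restrict x S2))) (PiE (S1 \<union> S2) \<Omega>)
       = kron (msum a F (PiE S1 \<Omega>)) (msum b G (PiE S2 \<Omega>))"
proof (rule eq_matI)
  fix i j assume "i < dim_row (kron (msum a F (PiE S1 \<Omega>)) (msum b G (PiE S2 \<Omega>)))"
    "j < dim_col (kron (msum a F (PiE S1 \<Omega>)) (msum b G (PiE S2 \<Omega>)))"
  then have i: "i < a*b" and j: "j < a*b" by (simp_all add: kron_def msum_def)
  then have "b > 0" by (cases "b = 0") auto
  then have ij_div: "i div b < a" "j div b < a" and ij_mod: "i mod b < b" "j mod b < b"
    using i j by (simp_all add: less_mult_imp_div_less)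
  have restrict_in: "restrict x S1 \<in> PiE S1 \<Omega>" "restrict x S2 \<in> PiE S2 \<Omega>"
    if "x \<in> PiE (S1 \<union> S2) \<Omega>" for x
    using that by auto
  define h where "h yz = F (fst yz) $$ (i div b, j div b) * G (snd yz) $$ (i mod b, j mod b)" for yz
  have "msum (a*b) (\<lambda>x. kron (F (restrict x S1)) (G (restrict x S2))) (PiE (S1 \<union> S2) \<Omega>) $$ (i,j)
      = (\<Sum>x\<in>PiE (S1 \<union> S2) \<Omega>. h (restrict x S1, restrict x S2))"
    unfolding msum_index[OF i j]
  proof (intro sum.cong refl)
    fix x assume "x \<in> PiE (S1 \<union> S2) \<Omega>"
    note x = restrict_in[OF this]
    show "kron (F (restrict x S1)) (G (restrict x S2)) $$ (i,j) = h (restrict x S1, restrict x S2)"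
      unfolding kron_index[OF F[OF x(1)] G[OF x(2)] i j] h_def by simp
  qed
  also have "\<dots> = (\<Sum>yz\<in>PiE S1 \<Omega> \<times> PiE S2 \<Omega>. h yz)"
    by (rule sum.reindex_bij_betw[OF bij_betw_restrict_PiE_Un[OF disj]])
  also have "\<dots> = (\<Sum>y\<in>PiE S1 \<Omega>. F y $$ (i div b, j div b)) * (\<Sum>z\<in>PiE S2 \<Omega>. G z $$ (i mod b, j mod b))"
    unfolding h_def sum_product sum.cartesian_product by (intro sum.cong refl) (simp add: split_beta)
  also have "\<dots> = kron (msum a F (PiE S1 \<Omega>)) (msum b G (PiE S2 \<Omega>)) $$ (i,j)"
    by (simp add: kron_index[OF msum_carrier msum_carrier i j] msum_index[OF ij_div] msum_index[OF ij_mod])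
  finally show "msum (a*b) (\<lambda>x. kron (F (restrict x S1)) (G (restrict x S2))) (PiE (S1 \<union> S2) \<Omega>) $$ (i,j)
      = kron (msum a F (PiE S1 \<Omega>)) (msum b G (PiE S2 \<Omega>)) $$ (i,j)" .
qed (simp_all add: kron_def msum_def)

lemma povm_reindex:
  assumes h: "bij_betw h S T" and E: "povm d E T"
  shows "povm d (\<lambda>x. E (h x)) S"
proof -
  have "msum d (\<lambda>x. E (h x)) S = msum d E T"
  proof -
    have "(\<Sum>x\<in>S. E (h x) $$ (i,j)) = (\<Sum>y\<in>T. E y $$ (i,j))" for i j
      by (rule sum.reindex_bij_betw[OF h])
    then show ?thesis unfolding msum_def by simp
  qed
  then show ?thesis
    using E bij_betw_finite[OF h] bij_betwE[OF h] unfolding povm_def by auto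
qed

lemma povm_kraus_kron:
  assumes F: "povm a F (PiE S1 \<Omega>)" and G: "povm b G (PiE S2 \<Omega>)" and disj: "S1 \<inter> S2 = {}"
    and K: "\<forall>K\<in>set Ks. K \<in> carrier_mat d (a*b)" and unital: "kraus_apply d Ks (1\<^sub>m (a*b)) = 1\<^sub>m d"
  shows "povm d (\<lambda>x. kraus_apply d Ks (kron (F (restrict x S1)) (G (restrict x S2)))) (PiE (S1 \<union> S2) \<Omega>)"
proof -
  note bij = bij_betw_restrict_PiE_Un[OF disj, of \<Omega>]
  have F_psd: "\<And>y. y \<in> PiE S1 \<Omega> \<Longrightarrow> psd a (F y)" and G_psd: "\<And>z. z \<in> PiE S2 \<Omega> \<Longrightarrow> psd b (G z)"
    using F G unfolding povm_def by blast+
  have kron_psd: "psd (a*b) (kron (F (restrict x S1)) (G (restrict x S2)))"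
    if "x \<in> PiE (S1 \<union> S2) \<Omega>" for x
    using bij_betwE[OF bij] that by (intro psd_kron F_psd G_psd) auto
  have "finite (PiE (S1 \<union> S2) \<Omega>)"
    using F G bij_betw_finite[OF bij] unfolding povm_def by simp
  moreover have "msum d (\<lambda>x. kraus_apply d Ks (kron (F (restrict x S1)) (G (restrict x S2)))) (PiE (S1 \<union> S2) \<Omega>)
      = kraus_apply d Ks (kron (msum a F (PiE S1 \<Omega>)) (msum b G (PiE S2 \<Omega>)))"
    by (simp add: kraus_apply_msum[OF K] psd_carrier[OF kron_psd]
        msum_kron_PiE[OF disj psd_carrier[OF F_psd] psd_carrier[OF G_psd], symmetric])
  moreover have "\<dots> = 1\<^sub>m d"
    using F G unital unfolding povm_def by (simp add: kron_one)
  ultimately show ?thesis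
    using kron_psd K unfolding povm_def by (auto intro: psd_kraus_apply)
qed

lemma eval_restrict: "set (leaves C) \<subseteq> S \<Longrightarrow> eval C (restrict x S) = eval C x"
  by (induction C) auto

lemma pos_unital_povm:
  "pos_unital \<Omega> C \<Longrightarrow> distinct (leaves C) \<Longrightarrow> povm (cdim C) (eval C) (PiE (set (leaves C)) \<Omega>)"
proof (induction C)
  case (Leaf k d E)
  have "eval (Leaf k d E) = (\<lambda>x. E (x k))" by auto
  then show ?case using Leaf povm_reindex[OF bij_betw_PiE_singleton] by simp
next
  case (Node d Ks l r)
  let ?S1 = "set (leaves l)" and ?S2 = "set (leaves r)"
  have "povm d (\<lambda>x. kraus_apply d Ks (kron (eval l (restrict x ?S1)) (eval r (restrict x ?S2))))
          (PiE (?S1 \<union> ?S2) \<Omega>)"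
    using Node by (intro povm_kraus_kron) (auto simp: quantum_op_def)
  moreover have "eval (Node d Ks l r) = (\<lambda>x. kraus_apply d Ks (kron (eval l x) (eval r x)))" by auto
  ultimately show ?case by (simp add: eval_restrict)
qed

theorem proposition4:
  fixes N :: nat and \<Omega> :: "nat \<Rightarrow> 'a set" and C :: "'a circ"
  assumes "\<And>k. k < N \<Longrightarrow> finite (\<Omega> k)"
    and "partition_circ N C"
    and "pos_unital \<Omega> C"
  shows "povm (cdim C) (eval C) (PiE {..<N} \<Omega>)"
proof -
  have "distinct (leaves C)" and "set (leaves C) = {..<N}"
    using assms(2) unfolding partition_circ_def by auto
  then show ?thesis using pos_unital_povm[OF assms(3)] by simp
qed

end
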